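(* Let $\alpha\in\mathbb{R}$, let $p$ be a positive integer, $a\in\mathbb{R}$, and let $f$ be defined only on $\mathbb{N}_a$. Then for all $t\in\mathbb{N}_{a+2p-1}$, $$\nabla_{a+p-1}^{-\alpha}\nabla^p f(t)=\nabla^p\nabla_{a+p-1}^{-\alpha}f(t)-\sum_{k=0}^{p-1}\frac{(t-(a+p-1))^{\overline{\alpha-p+k}}}{\Gamma(\alpha+k-p+1)}\nabla^k f(a+p-1).$$
   Context: Notation: $\mathbb{N}_c=\{c,c+1,\dots\}$, $\rho(t)=t-1$, $\nabla g(t)=g(t)-g(t-1)$, $\nabla^m=\nabla(\nabla^{m-1})$. Rising factorial: $t^{\overline{\beta}}=\Gamma(t+\beta)/\Gamma(t)$ with $0^{\overline{\beta}}=0$; the reciprocal of $\Gamma$ at a pole is $0$. For $\gamma>0$ and starting point $c$, the nabla left fractional sum is $\nabla_c^{-\gamma}g(t)=\frac{1}{\Gamma(\gamma)}\sum_{s=c+1}^{t}(t-\rho(s))^{\overline{\gamma-1}}g(s)$, a sum with upper limit smaller than lower limit being $0$. For $\beta>0$ let $n=[\beta]+1$ with $[\beta]$ the greatest integer strictly less than $\beta$; the nabla left fractional difference is $\nabla_c^{\beta}g(t)=\nabla^n\nabla_c^{-(n-\beta)}g(t)$ (order-$0$ operator = identity). For $\alpha<0$, $\nabla_c^{-\alpha}$ denotes the nabla left fractional difference of order $-\alpha$; for $\alpha=0$ the identity. *)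

theory Defs
  imports "HOL-Analysis.Analysis"
begin

definition Nset :: "real \<Rightarrow> real set" where
  "Nset c = {c + real n | n. True}"

text \<open>Rising factorial t^(beta) = Gamma(t+beta)/Gamma(t), with 0^(beta) = 0 and
  the reciprocal of Gamma at a pole equal to 0 (rGamma).\<close>
definition rising :: "real \<Rightarrow> real \<Rightarrow> real" where
  "rising t \<beta> = (if t = 0 then 0 else Gamma (t + \<beta>) * rGamma t)"

definition nabla :: "(real \<Rightarrow> real) \<Rightarrow> real \<Rightarrow> real" where
  "nabla g t = g t - g (t - 1)"

definition nabla_pow :: "nat \<Rightarrow> (real \<Rightarrow> real) \<Rightarrow> real \<Rightarrow> real" where
  "nabla_pow m g = (nabla ^^ m) g"

text \<open>Nabla left fractional sum of order gamma > 0 with starting point c: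
  sum over s = c+1, ..., t (s = c + k, k = 1 .. t - c); empty if t < c + 1.\<close>
definition nabla_frac_sum :: "real \<Rightarrow> real \<Rightarrow> (real \<Rightarrow> real) \<Rightarrow> real \<Rightarrow> real" where
  "nabla_frac_sum c \<gamma> g t =
     rGamma \<gamma> * (\<Sum>k\<in>{1..nat \<lfloor>t - c\<rfloor>}.
        rising (t - (c + real k - 1)) (\<gamma> - 1) * g (c + real k))"

text \<open>General operator nabla_c^mu: for mu < 0 the fractional sum of order -mu,
  for mu = 0 the identity, for mu > 0 the fractional difference
  nabla^n nabla_c^(-(n - mu)) with n = [mu] + 1 = ceiling mu (order-0 sum = identity).\<close>
definition nabla_frac :: "real \<Rightarrow> real \<Rightarrow> (real \<Rightarrow> real) \<Rightarrow> real \<Rightarrow> real" where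
  "nabla_frac c \<mu> g =
     (if \<mu> < 0 then nabla_frac_sum c (- \<mu>) g
      else if \<mu> = 0 then g
      else (let n = nat \<lceil>\<mu>\<rceil> in
            nabla_pow n (if real n - \<mu> = 0 then g else nabla_frac_sum c (real n - \<mu>) g)))"

end

theory Submission
  imports Defs
begin

(*
  Write c = a + p - 1 and F = nabla_c^(-alpha).  All functions are only ever
  evaluated on the lattice c + Z, and t - c is an integer there, so the
  argument is pure discrete calculus on that lattice:

  1. Power rules for the rising factorial:
     (m)^(beta) - (m-1)^(beta) = beta (m)^(beta-1), and a version normalised
     by rGamma that holds for every exponent beta.
  2. Summation by parts: a fractional sum of a difference equals the difference
     of the fractional sum minus the boundary term (t-c)^(gamma-1)/Gamma(gamma) g(c).
  3. Applying nabla^n to this identity (the power rule moves the exponent down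
     by n) gives the same statement for fractional differences, hence
     F (nabla g) = nabla (F g) - (t-c)^(alpha-1)/Gamma(alpha) g(c) for every alpha.
  4. Induction on p, using the normalised power rule to absorb the boundary
     terms, yields the p-th order identity, from which the theorem follows.
*)

(* The functional equation of Gamma; at the poles both sides vanish, so only z = 0 is excluded. *)
lemma Gamma_plus1_nonzero:
  fixes z :: real
  assumes "z \<noteq> 0"
  shows "Gamma (z + 1) = z * Gamma z"
proof -
  have "rGamma (z + 1) = rGamma z / z" using rGamma_plus1[of z] assms by (simp add: field_simps)
  then show ?thesis unfolding Gamma_def by (simp add: field_simps)
qed

(* The rising factorial vanishes at non-positive integers (0 by convention, poles of Gamma otherwise). *)
lemma rising_nonpos_int: "m \<le> 0 \<Longrightarrow> rising (of_int m) \<beta> = 0"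
  unfolding rising_def by (auto simp: rGamma_nonpos_Int nonpos_Ints_of_int)

lemma rising_diff:
  fixes z \<beta> :: real
  assumes "z \<ge> 0" and "z + \<beta> \<noteq> 0"
  shows "rising (z + 1) \<beta> - rising z \<beta> = \<beta> * rising (z + 1) (\<beta> - 1)"
proof (cases "z = 0")
  case True
  then show ?thesis
    using Gamma_plus1_nonzero[of \<beta>] assms(2) by (simp add: rising_def add.commute)
next
  case False
  then have z: "z > 0" using assms(1) by simp
  have "Gamma (z + \<beta> + 1) = (z + \<beta>) * Gamma (z + \<beta>)"
    using Gamma_plus1_nonzero[OF assms(2)] .
  moreover have "rGamma (z + 1) = rGamma z / z"
    using rGamma_plus1[of z] z by (simp add: field_simps)
  ultimately show ?thesis
    using z by (simp add: rising_def field_simps add_ac)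
qed

lemma rising_diff_int:
  fixes \<beta> :: real
  assumes "\<beta> \<notin> \<int>"
  shows "rising (of_int m) \<beta> - rising (of_int m - 1) \<beta> = \<beta> * rising (of_int m) (\<beta> - 1)"
proof (cases "m \<le> 0")
  case True
  then show ?thesis using rising_nonpos_int[of m] rising_nonpos_int[of "m - 1"] by simp
next
  case False
  have "of_int m - 1 + \<beta> \<noteq> 0"
  proof
    assume "of_int m - 1 + \<beta> = 0"
    then have "\<beta> = of_int (1 - m)" by simp
    then show False using assms by simp
  qed
  then show ?thesis using rising_diff[of "of_int m - 1" \<beta>] False by simp
qed

(* Normalised power rule nabla_t (t^(beta) / Gamma(beta+1)) = t^(beta-1) / Gamma(beta) at integers
   N >= 2, valid for every exponent: it produces the boundary coefficients of the theorem. *)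
lemma rising_diff_normalized:
  fixes \<beta> :: real and N :: nat
  assumes "N \<ge> 2"
  shows "(rising (real N) \<beta> - rising (real N - 1) \<beta>) * rGamma (\<beta> + 1)
           = rising (real N) (\<beta> - 1) * rGamma \<beta>"
proof (cases "\<beta> + 1 \<in> \<int>\<^sub>\<le>\<^sub>0")
  case True
  then show ?thesis using plus_one_in_nonpos_Ints_imp[OF True] by (simp add: rGamma_nonpos_Int)
next
  case False
  have "real N - 1 + \<beta> \<noteq> 0"
  proof
    assume "real N - 1 + \<beta> = 0"
    then have "\<beta> + 1 = - of_nat (N - 2)" using assms by (simp add: of_nat_diff)
    then show False using False by simp
  qed
  then have "(rising (real N) \<beta> - rising (real N - 1) \<beta>) * rGamma (\<beta> + 1)
      = rising (real N) (\<beta> - 1) * (\<beta> * rGamma (\<beta> + 1))"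
    using rising_diff[of "real N - 1" \<beta>] assms by simp
  then show ?thesis by (simp add: rGamma_plus1)
qed

lemma nabla_pow_0 [simp]: "nabla_pow 0 g = g"
  unfolding nabla_pow_def by simp

lemma nabla_pow_Suc: "nabla_pow (Suc n) g = nabla (nabla_pow n g)"
  unfolding nabla_pow_def by simp

lemma nabla_pow_Suc_at: "nabla_pow (Suc n) g t = nabla_pow n g t - nabla_pow n g (t - 1)"
  by (simp add: nabla_pow_Suc nabla_def)

lemma nabla_pow_nabla: "nabla_pow n (nabla g) = nabla (nabla_pow n g)"
  unfolding nabla_pow_def by (simp add: funpow_swap1)

lemma nabla_pow_diff_scaled:
  "nabla_pow n (\<lambda>t. g t - k * h t) t = nabla_pow n g t - k * nabla_pow n h t"
  by (induction n arbitrary: t) (simp_all add: nabla_pow_Suc_at algebra_simps)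

lemma nabla_pow_cong_lattice:
  assumes "\<And>j::int. g (c + of_int j) = h (c + of_int j)"
  shows "nabla_pow n g (c + of_int m) = nabla_pow n h (c + of_int m)"
proof (induction n arbitrary: m)
  case 0
  then show ?case using assms by simp
next
  case (Suc n)
  have shift: "c + of_int m - 1 = c + of_int (m - 1)" by simp
  show ?case unfolding nabla_pow_Suc_at shift using Suc.IH[of m] Suc.IH[of "m - 1"] by simp
qed

lemma nabla_pow_rising:
  fixes \<beta> c :: real
  assumes "\<beta> \<notin> \<int>"
  shows "nabla_pow j (\<lambda>t. rising (t - c) \<beta>) (c + of_int m)
           = (\<Prod>i<j. \<beta> - real i) * rising (of_int m) (\<beta> - real j)"
proof (induction j arbitrary: m)
  case 0
  then show ?case by simp
next
  case (Suc j)
  have shift: "c + of_int m - 1 = c + of_int (m - 1)" by simp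
  have "\<beta> - real j \<notin> \<int>"
    using assms Ints_add[of "\<beta> - real j" "real j"] by auto
  have "nabla_pow (Suc j) (\<lambda>t. rising (t - c) \<beta>) (c + of_int m) = (\<Prod>i<j. \<beta> - real i)
      * (rising (of_int m) (\<beta> - real j) - rising (of_int m - 1) (\<beta> - real j))"
    unfolding nabla_pow_Suc_at shift Suc.IH by (simp add: algebra_simps)
  also have "\<dots> = (\<Prod>i<j. \<beta> - real i) * ((\<beta> - real j) * rising (of_int m) (\<beta> - real j - 1))"
    using rising_diff_int[OF \<open>\<beta> - real j \<notin> \<int>\<close>] by simp
  finally show ?case by (simp add: algebra_simps)
qed

lemma rGamma_times_falling:
  fixes z :: real
  shows "rGamma z * (\<Prod>i<n. z - 1 - real i) = rGamma (z - real n)"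
proof (induction n)
  case 0
  then show ?case by simp
next
  case (Suc n)
  have "(z - real n - 1) * rGamma (z - real n - 1 + 1) = rGamma (z - real n - 1)"
    by (rule rGamma_plus1)
  then show ?case using Suc by (simp add: algebra_simps)
qed

lemma frac_sum_lattice:
  "nabla_frac_sum c \<gamma> g (c + of_int m) =
     rGamma \<gamma> * (\<Sum>k=1..nat m. rising (of_int m - real k + 1) (\<gamma> - 1) * g (c + real k))"
proof -
  have offset: "c + of_int m - (c + real k - 1) = of_int m - real k + 1" for k by simp
  show ?thesis unfolding nabla_frac_sum_def offset by simp
qed

lemma sum_shift_down:
  fixes F :: "real \<Rightarrow> real"
  shows "(\<Sum>k=1..Suc n. F (c + real k - 1)) = F c + (\<Sum>k=1..n. F (c + real k))"
proof -
  have "(\<Sum>k=1..Suc n. F (c + real k - 1)) = (\<Sum>k=0..n. F (c + real k))"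
    by (simp only: One_nat_def sum.shift_bounds_cl_Suc_ivl) simp
  also have "\<dots> = F c + (\<Sum>k=1..n. F (c + real k))"
    by (simp add: sum.atLeast_Suc_atMost)
  finally show ?thesis .
qed

lemma frac_sum_nabla:
  "nabla_frac_sum c \<gamma> (nabla g) (c + of_int m) =
     nabla (nabla_frac_sum c \<gamma> g) (c + of_int m) - rising (of_int m) (\<gamma> - 1) * rGamma \<gamma> * g c"
proof (cases "m \<le> 0")
  case True
  have shift: "c + of_int m - 1 = c + of_int (m - 1)" by simp
  show ?thesis
    unfolding nabla_def shift frac_sum_lattice using True by (simp add: rising_nonpos_int)
next
  case False
  define n where "n = nat m - 1"
  have m: "m = int (Suc n)" using False unfolding n_def by simp
  then have nat_m: "nat m = Suc n" and real_m: "real_of_int m = real n + 1" by simp_all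
  define w where "w x = rising (real n - x + 2) (\<gamma> - 1)" for x
  have fs_m: "nabla_frac_sum c \<gamma> h (c + of_int m)
      = rGamma \<gamma> * (\<Sum>k=1..Suc n. w (real k) * h (c + real k))" for h
    using frac_sum_lattice[of c \<gamma> h m] unfolding nat_m real_m w_def
    by (simp del: sum.cl_ivl_Suc add: algebra_simps)
  have fs_m1: "nabla_frac_sum c \<gamma> g (c + of_int m - 1)
      = rGamma \<gamma> * (\<Sum>k=1..n. w (real k + 1) * g (c + real k))"
    using frac_sum_lattice[of c \<gamma> g "int n"] unfolding m w_def by (simp add: algebra_simps)
  have "(\<Sum>k=1..Suc n. w (real k) * g (c + real k - 1))
      = w 1 * g c + (\<Sum>k=1..n. w (real k + 1) * g (c + real k))"
    using sum_shift_down[of "\<lambda>s. w (s - c + 1) * g s" c n] by simp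
  moreover have "w 1 = rising (of_int m) (\<gamma> - 1)" unfolding w_def m by simp
  ultimately show ?thesis
    unfolding nabla_def fs_m fs_m1 by (simp add: algebra_simps sum_subtractf)
qed

lemma nabla_pow_frac_sum_nabla:
  fixes \<nu> :: real
  assumes "\<nu> \<notin> \<int>"
  shows "nabla_pow n (nabla_frac_sum c \<nu> (nabla g)) (c + of_int m) =
     nabla (nabla_pow n (nabla_frac_sum c \<nu> g)) (c + of_int m)
     - rising (of_int m) (\<nu> - 1 - real n) * rGamma (\<nu> - real n) * g c"
proof -
  have "\<nu> - 1 \<notin> \<int>"
    using assms Ints_add[of "\<nu> - 1" 1] by auto
  define k where "k = rGamma \<nu> * g c"
  have "nabla_pow n (nabla_frac_sum c \<nu> (nabla g)) (c + of_int m) =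
      nabla_pow n (\<lambda>t. nabla (nabla_frac_sum c \<nu> g) t - k * rising (t - c) (\<nu> - 1)) (c + of_int m)"
    by (rule nabla_pow_cong_lattice) (simp add: frac_sum_nabla k_def)
  also have "\<dots> = nabla_pow n (nabla (nabla_frac_sum c \<nu> g)) (c + of_int m)
      - k * nabla_pow n (\<lambda>t. rising (t - c) (\<nu> - 1)) (c + of_int m)"
    by (rule nabla_pow_diff_scaled)
  also have "\<dots> = nabla (nabla_pow n (nabla_frac_sum c \<nu> g)) (c + of_int m)
      - k * ((\<Prod>i<n. \<nu> - 1 - real i) * rising (of_int m) (\<nu> - 1 - real n))"
    by (simp add: nabla_pow_nabla nabla_pow_rising[OF \<open>\<nu> - 1 \<notin> \<int>\<close>])
  also have "k * ((\<Prod>i<n. \<nu> - 1 - real i) * rising (of_int m) (\<nu> - 1 - real n))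
      = rising (of_int m) (\<nu> - 1 - real n) * rGamma (\<nu> - real n) * g c"
    by (simp add: k_def flip: rGamma_times_falling)
  finally show ?thesis .
qed

lemma frac_nabla_commute:
  fixes \<alpha> c :: real and m :: int
  shows "nabla_frac c (- \<alpha>) (nabla g) (c + of_int m) =
     nabla (nabla_frac c (- \<alpha>) g) (c + of_int m) - rising (of_int m) (\<alpha> - 1) * rGamma \<alpha> * g c"
proof -
  consider "\<alpha> > 0" | "\<alpha> = 0" | "\<alpha> < 0" by linarith
  then show ?thesis
  proof cases
    case 1
    then show ?thesis unfolding nabla_frac_def by (simp add: frac_sum_nabla)
  next
    case 2
    then show ?thesis unfolding nabla_frac_def by simp
  next
    case 3
    define n where "n = nat \<lceil>- \<alpha>\<rceil>"
    define \<nu> where "\<nu> = real n + \<alpha>"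
    have frac: "nabla_frac c (- \<alpha>) h = nabla_pow n (if \<nu> = 0 then h else nabla_frac_sum c \<nu> h)"
      for h unfolding nabla_frac_def n_def \<nu>_def using 3 by (simp add: Let_def)
    have "real n = of_int \<lceil>- \<alpha>\<rceil>" unfolding n_def using 3 by simp
    then have \<nu>_range: "0 \<le> \<nu>" "\<nu> < 1" unfolding \<nu>_def by linarith+
    have \<alpha>: "\<alpha> = \<nu> - real n" unfolding \<nu>_def by simp
    show ?thesis
    proof (cases "\<nu> = 0")
      case True
      then have "rGamma \<alpha> = 0" unfolding \<alpha> by simp
      then show ?thesis unfolding frac using True by (simp add: nabla_pow_nabla)
    next
      case False
      have "\<nu> \<notin> \<int>"
      proof
        assume "\<nu> \<in> \<int>"
        then obtain j where "\<nu> = of_int j" by (auto elim: Ints_cases)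
        with \<nu>_range False show False by simp
      qed
      then have "nabla_pow n (nabla_frac_sum c \<nu> (nabla g)) (c + of_int m) =
          nabla (nabla_pow n (nabla_frac_sum c \<nu> g)) (c + of_int m)
          - rising (of_int m) (\<alpha> - 1) * rGamma \<alpha> * g c"
        using nabla_pow_frac_sum_nabla[of \<nu> n c g m] unfolding \<alpha> by (simp add: algebra_simps)
      then show ?thesis unfolding frac using False by simp
    qed
  qed
qed

lemma frac_nabla_pow_commute:
  fixes \<alpha> c :: real and f :: "real \<Rightarrow> real" and p N :: nat
  assumes "p \<le> N"
  shows "nabla_frac c (- \<alpha>) (nabla_pow p f) (c + real N) =
           nabla_pow p (nabla_frac c (- \<alpha>) f) (c + real N)
           - (\<Sum>k<p. rising (real N) (\<alpha> - real p + real k)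
                 * rGamma (\<alpha> + real k - real p + 1) * nabla_pow k f c)"
  using assms
proof (induction p arbitrary: N)
  case 0
  then show ?case by simp
next
  case (Suc p)
  let ?F = "nabla_frac c (- \<alpha>)"
  define B where "B q M k = rising (real M) (\<alpha> - real q + real k)
      * rGamma (\<alpha> + real k - real q + 1) * nabla_pow k f c" for q M k
  have N: "p \<le> N - 1" "c + real N - 1 = c + real (N - 1)" "real (N - 1) = real N - 1"
    using Suc.prems by (auto simp: of_nat_diff)
  have first_order: "?F (nabla_pow (Suc p) f) (c + real N) =
      nabla (?F (nabla_pow p f)) (c + real N) - B (Suc p) N p"
    using frac_nabla_commute[of c \<alpha> "nabla_pow p f" "int N"] by (simp add: nabla_pow_Suc B_def)
  have lower_order: "nabla (?F (nabla_pow p f)) (c + real N) =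
      nabla_pow (Suc p) (?F f) (c + real N) - (\<Sum>k<p. B p N k - B p (N - 1) k)"
    unfolding nabla_def nabla_pow_Suc_at N(2) using Suc.IH[of N] Suc.IH[of "N - 1"] Suc.prems N(1)
    by (simp add: sum_subtractf B_def)
  have coefficients: "B p N k - B p (N - 1) k = B (Suc p) N k" if "k < p" for k
  proof -
    have "N \<ge> 2" using that Suc.prems by simp
    from rising_diff_normalized[OF this, of "\<alpha> - real p + real k"]
    show ?thesis unfolding B_def N(3) by (simp add: algebra_simps)
  qed
  have "(\<Sum>k<Suc p. B (Suc p) N k) = (\<Sum>k<p. B p N k - B p (N - 1) k) + B (Suc p) N p"
    using coefficients by simp
  then show ?case unfolding first_order lower_order B_def by simp
qed

theorem theorem2p11:
  fixes \<alpha> a t :: real and p :: nat and f :: "real \<Rightarrow> real"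
  assumes "p \<ge> 1"
    and "t \<in> Nset (a + 2 * real p - 1)"
  shows "nabla_frac (a + real p - 1) (- \<alpha>) (nabla_pow p f) t =
           nabla_pow p (nabla_frac (a + real p - 1) (- \<alpha>) f) t
           - (\<Sum>k = 0..p - 1. rising (t - (a + real p - 1)) (\<alpha> - real p + real k)
                 * rGamma (\<alpha> + real k - real p + 1) * nabla_pow k f (a + real p - 1))"
proof -
  obtain n where "t = a + 2 * real p - 1 + real n"
    using assms(2) unfolding Nset_def by auto
  then have t: "t = (a + real p - 1) + real (p + n)"
    and offset: "t - (a + real p - 1) = real (p + n)" by simp_all
  have range: "{0..p - 1} = {..<p}" using assms(1) by auto
  show ?thesis
    unfolding offset range
    using frac_nabla_pow_commute[of p "p + n" "a + real p - 1" \<alpha> f] unfolding t[symmetric] by simp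
qed

end
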